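(* Let $d\ge2$ and $\widehat K_1(t)=\int_{\mathbb R^{d-1}}K_1(t,\zeta_2,\dots,\zeta_d)\,d\zeta_2\cdots d\zeta_d$ for $t>0$. Then there exists a positive Borel measure $\mu$ on $[0,+\infty)$ such that $\widehat K_1(t)=\int_0^{+\infty}e^{-\alpha t}\,d\mu(\alpha)$ for all $t>0$.
   Context: $K_1(\zeta)=e^{-|\zeta|_1}/|\zeta|_1^{d-2}$ for $\zeta\in\mathbb R^d$, where $|\zeta|_1=\sum_i|\zeta_i|$. *)

theory Defs
  imports "HOL-Analysis.Analysis"
begin

definition l1norm :: "'a::euclidean_space \<Rightarrow> real" where
  "l1norm \<zeta> = (\<Sum>b\<in>Basis. \<bar>\<zeta> \<bullet> b\<bar>)"

definition K1 :: "'a::euclidean_space \<Rightarrow> real" where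
  "K1 \<zeta> = exp (- l1norm \<zeta>) / l1norm \<zeta> ^ (DIM('a) - 2)"

text \<open>Hat K_1(t): integral of K_1(t, zeta_2, ..., zeta_d) over R^(d-1) = real^'n,
  so that R^d is modelled as real \<times> real^'n and d = CARD('n) + 1 \<ge> 2.\<close>
definition K1hat :: "'n::finite itself \<Rightarrow> real \<Rightarrow> real" where
  "K1hat _ t = (\<integral>z. K1 (t, z :: real^'n) \<partial>lborel)"

end

theory Submission
  imports Defs "HOL-Probability.Probability"
begin

text \<open>
  For \<open>t > 0\<close>, \<open>K\<^sub>1(t, z) = f(t + |z|\<^sub>1)\<close> with \<open>f(s) = exp(-s) / s ^ m\<close> and \<open>m = d - 2\<close>, and
  \<open>f\<close> is the Laplace transform of a measure on \<open>[1, \<infinity>)\<close>: the Dirac mass at 1 if \<open>m = 0\<close>,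
  and \<open>(a - 1) ^ (m - 1) / (m - 1)! da\<close> if \<open>m \<ge> 1\<close> (a shifted Gamma integral). Substituting this
  into the integral over \<open>z\<close> and exchanging the order of integration (Tonelli) exhibits
  \<open>K1hat(t)\<close> as the Laplace transform of that measure weighted by \<open>F(a) = \<integral> exp(-a |z|\<^sub>1) dz\<close>.
  The computation uses nonnegative integrals throughout; the bound
  \<open>K\<^sub>1(t, z) \<le> C\<^sub>t exp(-|z|\<^sub>1)\<close> identifies them with the Bochner integral defining \<open>K1hat\<close>.
\<close>

lemma l1norm_nonneg: "0 \<le> l1norm z"
  unfolding l1norm_def by (simp add: sum_nonneg)

lemma l1norm_Pair: "l1norm ((t, z) :: real \<times> 'b::euclidean_space) = \<bar>t\<bar> + l1norm z"
  unfolding l1norm_def Basis_prod_def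
  by (subst sum.union_disjoint) (auto simp: sum.reindex inj_on_def)

lemma borel_measurable_l1norm[measurable]: "l1norm \<in> borel_measurable borel"
  unfolding l1norm_def by (intro borel_measurable_continuous_onI continuous_intros)

lemma nn_integral_exp_neg_abs_finite:
  "(\<integral>\<^sup>+x. ennreal (exp (- \<bar>x::real\<bar>)) \<partial>lborel) < \<infinity>"
proof -
  have right: "(\<integral>\<^sup>+x. ennreal (erlang_density 0 1 x) \<partial>lborel) = 1"
    using nn_integral_erlang_ith_moment[of 1 0 0] by simp
  then have left: "(\<integral>\<^sup>+x. ennreal (erlang_density 0 1 (-x)) \<partial>lborel) = 1"
    using nn_integral_real_affine[of "\<lambda>x. ennreal (erlang_density 0 1 x)" "-1" 0] by simp
  have "(\<integral>\<^sup>+x. ennreal (exp (- \<bar>x::real\<bar>)) \<partial>lborel)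
     \<le> (\<integral>\<^sup>+x. ennreal (erlang_density 0 1 x) + ennreal (erlang_density 0 1 (-x)) \<partial>lborel)"
    by (intro nn_integral_mono)
       (auto simp: erlang_density_def ennreal_plus[symmetric] simp del: ennreal_plus)
  also have "\<dots> = 2"
    by (subst nn_integral_add) (auto simp: right left)
  finally show ?thesis
    by (simp add: le_less_trans)
qed

lemma nn_integral_exp_neg_l1norm_finite:
  "(\<integral>\<^sup>+z. ennreal (exp (- l1norm (z::'a::euclidean_space))) \<partial>lborel) < \<infinity>"
proof -
  have "(\<integral>\<^sup>+z. ennreal (exp (- l1norm (z::'a))) \<partial>lborel) =
        (\<integral>\<^sup>+z. (\<Prod>b\<in>Basis. ennreal (exp (- \<bar>(z::'a) \<bullet> b\<bar>))) \<partial>lborel)"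
    by (simp add: l1norm_def exp_sum[symmetric] sum_negf prod_ennreal)
  also have "\<dots> = (\<Prod>b\<in>(Basis::'a set). (\<integral>\<^sup>+x. exp (- \<bar>x\<bar>) \<partial>lborel))"
    by (subst nn_integral_lborel_prod) auto
  also have "\<dots> < \<infinity>"
    using nn_integral_exp_neg_abs_finite by (simp add: less_top[symmetric] power_eq_top_ennreal)
  finally show ?thesis .
qed

lemma integrable_exp_neg_over_power:
  fixes L :: "'a \<Rightarrow> real"
  assumes t: "0 < t" and L_nonneg: "\<And>z. 0 \<le> L z"
    and L_meas: "L \<in> borel_measurable M"
    and finite: "(\<integral>\<^sup>+z. ennreal (exp (- L z)) \<partial>M) < \<infinity>"
  shows "integrable M (\<lambda>z. exp (- (t + L z)) / (t + L z) ^ m)"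
proof (rule integrableI_nonneg)
  let ?C = "exp (- t) / t ^ m"
  have bound: "exp (- (t + L z)) / (t + L z) ^ m \<le> ?C * exp (- L z)" for z
  proof -
    have "exp (- (t + L z)) / (t + L z) ^ m \<le> exp (- (t + L z)) / t ^ m"
      using t L_nonneg[of z] by (intro divide_left_mono power_mono mult_pos_pos) auto
    also have "\<dots> = ?C * exp (- L z)"
      by (simp add: exp_diff exp_minus field_simps exp_add)
    finally show ?thesis .
  qed
  have "(\<integral>\<^sup>+z. ennreal (exp (- (t + L z)) / (t + L z) ^ m) \<partial>M) \<le> (\<integral>\<^sup>+z. ?C * ennreal (exp (- L z)) \<partial>M)"
    using bound t by (intro nn_integral_mono) (simp add: ennreal_mult'[symmetric] ennreal_leI)
  also have "\<dots> = ?C * (\<integral>\<^sup>+z. ennreal (exp (- L z)) \<partial>M)"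
    using L_meas by (intro nn_integral_cmult) simp
  also have "\<dots> < \<infinity>"
    using finite by (simp add: ennreal_mult_less_top)
  finally show "(\<integral>\<^sup>+z. ennreal (exp (- (t + L z)) / (t + L z) ^ m) \<partial>M) < \<infinity>" .
  show "AE z in M. 0 \<le> exp (- (t + L z)) / (t + L z) ^ m"
    using t L_nonneg by (simp add: add_nonneg_nonneg less_imp_le)
qed (use L_meas in measurable)

lemma exp_neg_over_power_laplace:
  obtains \<nu> :: "real measure"
  where "sigma_finite_measure \<nu>" "sets \<nu> = sets (restrict_space borel {0..})"
    "\<And>s. 0 < s \<Longrightarrow> ennreal (exp (- s) / s ^ m) = (\<integral>\<^sup>+a. ennreal (exp (- a * s)) \<partial>\<nu>)"
proof (cases m)
  case 0
  let ?\<nu> = "return (restrict_space borel {0::real..}) 1"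
  have "ennreal (exp (- s) / s ^ m) = (\<integral>\<^sup>+a. ennreal (exp (- a * s)) \<partial>?\<nu>)" for s
    by (subst nn_integral_return) (auto simp: 0 space_restrict_space measurable_restrict_space1)
  moreover have "sigma_finite_measure ?\<nu>"
    by (intro prob_space_imp_sigma_finite prob_space_return) (simp add: space_restrict_space)
  ultimately show ?thesis
    using that by simp
next
  case (Suc k)
  define g :: "real \<Rightarrow> real" where "g a = (if 1 \<le> a then (a - 1) ^ k / fact k else 0)" for a
  let ?\<nu> = "density (restrict_space lborel {0::real..}) g"
  have "ennreal (exp (- s) / s ^ m) = (\<integral>\<^sup>+a. ennreal (exp (- a * s)) \<partial>?\<nu>)" if s: "0 < s" for s
  proof -
    have "(\<integral>\<^sup>+a. ennreal (exp (- a * s)) \<partial>?\<nu>) = (\<integral>\<^sup>+a. ennreal (exp (- a * s) * g a) \<partial>lborel)"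
      by (subst nn_integral_density)
         (auto intro!: nn_integral_cong measurable_restrict_space1
               simp: g_def nn_integral_restrict_space ennreal_mult'[symmetric] mult.commute
               split: split_indicator)
    also have "\<dots> = (\<integral>\<^sup>+x. ennreal (exp (- (1 + x) * s) * g (1 + x)) \<partial>lborel)"
      using nn_integral_real_affine[of "\<lambda>a. ennreal (exp (- a * s) * g a)" 1 1] by (simp add: g_def)
    also have "\<dots> = (\<integral>\<^sup>+x. ennreal (exp (- s) / s ^ m) * ennreal (erlang_density k s x) \<partial>lborel)"
      using s
      by (intro nn_integral_cong)
         (auto simp: Suc g_def erlang_density_def ennreal_mult'[symmetric] field_simps
                     exp_add[symmetric] exp_diff)
    also have "\<dots> = ennreal (exp (- s) / s ^ m) * (\<integral>\<^sup>+x. ennreal (erlang_density k s x) \<partial>lborel)"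
      by (rule nn_integral_cmult) simp
    also have "(\<integral>\<^sup>+x. ennreal (erlang_density k s x) \<partial>lborel) = 1"
      using nn_integral_erlang_ith_moment[OF s, of k 0] by simp
    finally show ?thesis
      by simp
  qed
  moreover have "sigma_finite_measure ?\<nu>"
  proof -
    interpret restricted: sigma_finite_measure "restrict_space lborel {0::real..}"
      by (intro sigma_finite_measure_restrict_space lborel.sigma_finite_measure_axioms) simp
    show ?thesis
      by (subst restricted.sigma_finite_iff_density_finite)
         (auto intro: measurable_restrict_space1 simp: g_def)
  qed
  ultimately show ?thesis
    using that by (simp add: sets_restrict_space)
qed

lemma nn_integral_laplace_transform_shift:
  fixes L :: "'a \<Rightarrow> real" and \<nu> :: "real measure"
  assumes M: "sigma_finite_measure M" and \<nu>: "sigma_finite_measure \<nu>"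
    and sets_\<nu>: "sets \<nu> = sets (restrict_space borel {0..})"
    and L_meas: "L \<in> borel_measurable M" and L_nonneg: "\<And>z. 0 \<le> L z"
    and laplace: "\<And>s. 0 < s \<Longrightarrow> ennreal (f s) = (\<integral>\<^sup>+a. ennreal (exp (- a * s)) \<partial>\<nu>)"
    and t: "0 < t"
  shows "(\<integral>\<^sup>+z. ennreal (f (t + L z)) \<partial>M)
       = (\<integral>\<^sup>+a. ennreal (exp (- a * t)) * (\<integral>\<^sup>+z. ennreal (exp (- a * L z)) \<partial>M) \<partial>\<nu>)"
proof -
  interpret pair_sigma_finite M \<nu>
    using M \<nu> by (simp add: pair_sigma_finite_def)
  have id_meas[measurable]: "(\<lambda>a. a) \<in> borel_measurable \<nu>"
    by (simp add: measurable_cong_sets[OF sets_\<nu> refl] measurable_restrict_space1)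
  have "(\<integral>\<^sup>+z. ennreal (f (t + L z)) \<partial>M)
      = (\<integral>\<^sup>+z. (\<integral>\<^sup>+a. ennreal (exp (- a * (t + L z))) \<partial>\<nu>) \<partial>M)"
    using t L_nonneg by (intro nn_integral_cong laplace add_pos_nonneg) auto
  also have "\<dots> = (\<integral>\<^sup>+a. (\<integral>\<^sup>+z. ennreal (exp (- a * (t + L z))) \<partial>M) \<partial>\<nu>)"
    by (rule Fubini'[symmetric]) (use L_meas in measurable)
  also have "\<dots> = (\<integral>\<^sup>+a. ennreal (exp (- a * t)) * (\<integral>\<^sup>+z. ennreal (exp (- a * L z)) \<partial>M) \<partial>\<nu>)"
    by (intro nn_integral_cong, subst nn_integral_cmult[symmetric])
       (use L_meas in \<open>auto intro!: nn_integral_cong simp: ennreal_mult'[symmetric] exp_add[symmetric] algebra_simps\<close>)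
  finally show ?thesis .
qed

lemma ennreal_K1hat:
  assumes t: "0 < t"
  shows "ennreal (K1hat TYPE('n::finite) t) =
    (\<integral>\<^sup>+z. ennreal (exp (- (t + l1norm z)) / (t + l1norm (z::real^'n)) ^ (CARD('n) - 1)) \<partial>lborel)"
proof -
  have K1_Pair: "K1 (t, z) = exp (- (t + l1norm z)) / (t + l1norm z) ^ (CARD('n) - 1)"
    for z :: "real^'n"
    using t by (simp add: K1_def l1norm_Pair)
  have "integrable lborel (\<lambda>z::real^'n. exp (- (t + l1norm z)) / (t + l1norm z) ^ (CARD('n) - 1))"
    by (intro integrable_exp_neg_over_power t l1norm_nonneg nn_integral_exp_neg_l1norm_finite) simp
  moreover have "0 \<le> exp (- (t + l1norm z)) / (t + l1norm z) ^ (CARD('n) - 1)" for z :: "real^'n"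
    using t l1norm_nonneg[of z] by simp
  ultimately show ?thesis
    unfolding K1hat_def K1_Pair by (simp add: nn_integral_eq_integral)
qed

theorem lemma3p2:
  "\<exists>\<mu> :: real measure.
     sets \<mu> = sets (restrict_space borel {0..}) \<and>
     (\<forall>t>0. ennreal (K1hat TYPE('n::finite) t) =
              (\<integral>\<^sup>+ \<alpha>. ennreal (exp (- \<alpha> * t)) \<partial>\<mu>))"
proof -
  obtain \<nu> :: "real measure" where \<nu>: "sigma_finite_measure \<nu>"
    and sets_\<nu>: "sets \<nu> = sets (restrict_space borel {0..})"
    and laplace: "\<And>s. 0 < s \<Longrightarrow> ennreal (exp (- s) / s ^ (CARD('n) - 1)) = (\<integral>\<^sup>+a. ennreal (exp (- a * s)) \<partial>\<nu>)"
    using exp_neg_over_power_laplace by blast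
  define F where "F a = (\<integral>\<^sup>+z. ennreal (exp (- a * l1norm (z::real^'n))) \<partial>lborel)" for a
  have "F \<in> borel_measurable borel"
    unfolding F_def by (intro lborel.borel_measurable_nn_integral) measurable
  then have F_meas: "F \<in> borel_measurable \<nu>"
    by (simp add: measurable_cong_sets[OF sets_\<nu> refl] measurable_restrict_space1)
  have "ennreal (K1hat TYPE('n) t) = (\<integral>\<^sup>+a. ennreal (exp (- a * t)) \<partial>density \<nu> F)" if t: "0 < t" for t
  proof -
    have "ennreal (K1hat TYPE('n) t) = (\<integral>\<^sup>+a. ennreal (exp (- a * t)) * F a \<partial>\<nu>)"
      unfolding ennreal_K1hat[OF t] F_def
      by (rule nn_integral_laplace_transform_shift[OF lborel.sigma_finite_measure_axioms \<nu> sets_\<nu>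
                 _ l1norm_nonneg laplace t]) measurable
    also have "\<dots> = (\<integral>\<^sup>+a. ennreal (exp (- a * t)) \<partial>density \<nu> F)"
    proof -
      have "(\<lambda>a. ennreal (exp (- a * t))) \<in> borel_measurable \<nu>"
        by (simp add: measurable_cong_sets[OF sets_\<nu> refl] measurable_restrict_space1)
      then show ?thesis
        using F_meas by (simp add: nn_integral_density mult.commute)
    qed
    finally show ?thesis .
  qed
  then show ?thesis
    using sets_\<nu> by (intro exI[of _ "density \<nu> F"]) simp
qed

end
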